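(* Let $B$ and $H$ be differentiation bases in $\mathbb{R}^2$ with $B\subset H$. Then the union of at most countably many $R_{B,H}$-sets is a $W_{B,H}$-set, and the union of at most countably many $R^{+}_{B,H}$-sets is a $W^{+}_{B,H}$-set.
   Context: A differentiation basis in $\mathbb{R}^n$ is a mapping $B$ assigning to each $x\in\mathbb{R}^n$ a family $B(x)$ of bounded measurable sets of positive Lebesgue measure containing $x$, such that there is a sequence $R_k\in B(x)$ with $\operatorname{diam}R_k\to 0$. $B\subset H$ means $B(x)\subset H(x)$ for all $x$. For $f\in L(\mathbb{R}^n)$ the upper and lower derivatives of $\int f$ at $x$ with respect to $B$ are $\overline{D}_B(\int f,x)=\limsup_{R\in B(x),\,\operatorname{diam}R\to0}\frac{1}{|R|}\int_R f$ and $\underline{D}_B(\int f,x)=\liminf_{R\in B(x),\,\operatorname{diam}R\to0}\frac{1}{|R|}\int_R f$; $B$ differentiates $\int f$ if both equal $f(x)$ for almost every $x$. $F_B$ denotes the class of $f\in L(\mathbb{R}^n)$ whose integrals are differentiated by $B$. $\Gamma_2$ is the set of rotations of $\mathbb{R}^2$ about the origin. For $\gamma\in\Gamma_2$ the $\gamma$-rotated basis is $B(\gamma)(x)=\{x+\gamma(R-x): R\in B(x)\}$. For $E\subset\Gamma_2$: $E$ is a $W_{B,H}$-set (resp. $W^{+}_{B,H}$-set) if there exists $f\in L(\mathbb{R}^2)$ (resp. $f\in L(\mathbb{R}^2)$ with $f\ge 0$) such that (1) $f\notin F_{B(\gamma)}$ for every $\gamma\in E$ and (2) $f\in F_{H(\gamma)}$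 for every $\gamma\notin E$. $E$ is an $R_{B,H}$-set (resp. $R^{+}_{B,H}$-set) if there exists $f\in L(\mathbb{R}^2)$ (resp. $f\in L(\mathbb{R}^2)$ with $f\ge0$) such that (1) for every $\gamma\in E$, $\overline{D}_{B(\gamma)}(\int f,x)=\infty$ for almost every $x\in\mathbb{R}^2$, and (2) $f\in F_{H(\gamma)}$ for every $\gamma\notin E$. *)

theory Defs
  imports "HOL-Analysis.Analysis"
begin

type_synonym pt = "real^2"

definition diff_basis :: "(pt \<Rightarrow> pt set set) \<Rightarrow> bool" where
  "diff_basis B \<longleftrightarrow> (\<forall>x. (\<forall>R\<in>B x. bounded R \<and> R \<in> sets lebesgue \<and>
        0 < emeasure lebesgue R \<and> x \<in> R) \<and>
     (\<exists>Rs::nat \<Rightarrow> pt set. (\<forall>k. Rs k \<in> B x) \<and> (\<lambda>k. diameter (Rs k)) \<longlonglongrightarrow> 0))"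

definition basis_subset :: "(pt \<Rightarrow> pt set set) \<Rightarrow> (pt \<Rightarrow> pt set set) \<Rightarrow> bool" where
  "basis_subset B H \<longleftrightarrow> (\<forall>x. B x \<subseteq> H x)"

definition avg :: "(pt \<Rightarrow> real) \<Rightarrow> pt set \<Rightarrow> real" where
  "avg f R = (LINT y:R|lebesgue. f y) / measure lebesgue R"

text \<open>Upper / lower derivative of the integral of f at x w.r.t. B
  (limsup / liminf as diam R \<rightarrow> 0, R \<in> B x).\<close>
definition upper_deriv :: "(pt \<Rightarrow> pt set set) \<Rightarrow> (pt \<Rightarrow> real) \<Rightarrow> pt \<Rightarrow> ereal" where
  "upper_deriv B f x = (INF \<delta>\<in>{0<..}. SUP R\<in>{R\<in>B x. diameter R < \<delta>}. ereal (avg f R))"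

definition lower_deriv :: "(pt \<Rightarrow> pt set set) \<Rightarrow> (pt \<Rightarrow> real) \<Rightarrow> pt \<Rightarrow> ereal" where
  "lower_deriv B f x = (SUP \<delta>\<in>{0<..}. INF R\<in>{R\<in>B x. diameter R < \<delta>}. ereal (avg f R))"

definition F_class :: "(pt \<Rightarrow> pt set set) \<Rightarrow> (pt \<Rightarrow> real) set" where
  "F_class B = {f. integrable lebesgue f \<and>
     (AE x in lebesgue. upper_deriv B f x = ereal (f x) \<and> lower_deriv B f x = ereal (f x))}"

definition Gamma2 :: "(pt \<Rightarrow> pt) set" where
  "Gamma2 = {g. orthogonal_transformation g \<and> det (matrix g) = 1}"

definition rotated_basis :: "(pt \<Rightarrow> pt set set) \<Rightarrow> (pt \<Rightarrow> pt) \<Rightarrow> pt \<Rightarrow> pt set set" where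
  "rotated_basis B g x = (\<lambda>R. (\<lambda>y. x + g (y - x)) ` R) ` B x"

definition W_set :: "(pt \<Rightarrow> pt set set) \<Rightarrow> (pt \<Rightarrow> pt set set) \<Rightarrow> (pt \<Rightarrow> pt) set \<Rightarrow> bool" where
  "W_set B H E \<longleftrightarrow> E \<subseteq> Gamma2 \<and> (\<exists>f. integrable lebesgue f \<and>
     (\<forall>g\<in>E. f \<notin> F_class (rotated_basis B g)) \<and>
     (\<forall>g\<in>Gamma2 - E. f \<in> F_class (rotated_basis H g)))"

definition W_plus_set :: "(pt \<Rightarrow> pt set set) \<Rightarrow> (pt \<Rightarrow> pt set set) \<Rightarrow> (pt \<Rightarrow> pt) set \<Rightarrow> bool" where
  "W_plus_set B H E \<longleftrightarrow> E \<subseteq> Gamma2 \<and> (\<exists>f. integrable lebesgue f \<and> (\<forall>x. f x \<ge> 0) \<and>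
     (\<forall>g\<in>E. f \<notin> F_class (rotated_basis B g)) \<and>
     (\<forall>g\<in>Gamma2 - E. f \<in> F_class (rotated_basis H g)))"

definition R_set :: "(pt \<Rightarrow> pt set set) \<Rightarrow> (pt \<Rightarrow> pt set set) \<Rightarrow> (pt \<Rightarrow> pt) set \<Rightarrow> bool" where
  "R_set B H E \<longleftrightarrow> E \<subseteq> Gamma2 \<and> (\<exists>f. integrable lebesgue f \<and>
     (\<forall>g\<in>E. AE x in lebesgue. upper_deriv (rotated_basis B g) f x = \<infinity>) \<and>
     (\<forall>g\<in>Gamma2 - E. f \<in> F_class (rotated_basis H g)))"

definition R_plus_set :: "(pt \<Rightarrow> pt set set) \<Rightarrow> (pt \<Rightarrow> pt set set) \<Rightarrow> (pt \<Rightarrow> pt) set \<Rightarrow> bool" where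
  "R_plus_set B H E \<longleftrightarrow> E \<subseteq> Gamma2 \<and> (\<exists>f. integrable lebesgue f \<and> (\<forall>x. f x \<ge> 0) \<and>
     (\<forall>g\<in>E. AE x in lebesgue. upper_deriv (rotated_basis B g) f x = \<infinity>) \<and>
     (\<forall>g\<in>Gamma2 - E. f \<in> F_class (rotated_basis H g)))"

end

theory Submission
  imports Defs
begin

text \<open>
  Choose for each \<open>R\<close>-set \<open>E\<^sub>n\<close> a witness \<open>F\<^sub>n\<close>, damp it by a positive factor so that the
  \<open>L\<^sup>1\<close> norms become summable, and plant it on its own vertical strip \<open>n < x\<^sub>1 < n + 1\<close>;
  the glued function \<open>f\<close> vanishes on the half plane \<open>x\<^sub>1 < 0\<close>. Derivatives of integrals are
  local, so near almost every point \<open>f\<close> is either \<open>0\<close> or a positive multiple of one \<open>F\<^sub>n\<close>.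
  For a rotation in \<open>E\<^sub>n\<close> the upper derivative of \<open>\<integral>f\<close> is therefore infinite almost
  everywhere on the \<open>n\<close>-th strip, a set of positive measure, while for a rotation outside all
  \<open>E\<^sub>n\<close> every \<open>F\<^sub>n\<close>, hence \<open>f\<close>, is differentiated. Damping preserves signs, which gives the
  \<open>R\<^sup>+\<close>/\<open>W\<^sup>+\<close> version.
\<close>

lemma
  assumes "diff_basis B" and "R \<in> B x"
  shows diff_basis_bounded: "bounded R"
    and diff_basis_sets: "R \<in> sets lebesgue"
    and diff_basis_emeasure_pos: "0 < emeasure lebesgue R"
    and diff_basis_mem: "x \<in> R"
proof -
  have "bounded R \<and> R \<in> sets lebesgue \<and> 0 < emeasure lebesgue R \<and> x \<in> R"
    using assms unfolding diff_basis_def by blast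
  then show "bounded R" "R \<in> sets lebesgue" "0 < emeasure lebesgue R" "x \<in> R"
    by blast+
qed

lemma diff_basis_small_set:
  assumes "diff_basis B" and "\<delta> > 0"
  obtains R where "R \<in> B x" and "diameter R < \<delta>"
proof -
  obtain Rs where Rs: "\<And>k. Rs k \<in> B x" "(\<lambda>k. diameter (Rs k)) \<longlonglongrightarrow> 0"
    using assms(1) unfolding diff_basis_def by blast
  then obtain k where "\<bar>diameter (Rs k)\<bar> < \<delta>"
    using assms(2) LIMSEQ_D[OF Rs(2)] by fastforce
  then show thesis
    using that[OF Rs(1)] by (auto simp: abs_less_iff)
qed

lemma ereal_mult_SUP_pos:
  assumes "c > 0"
  shows "ereal c * (SUP i\<in>I. f i) = (SUP i\<in>I. ereal c * f i)"
  using assms Sup_ereal_mult_left'[of I c f] by (cases "I = {}") (auto simp: bot_ereal_def)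

lemma ereal_mult_INF_pos:
  assumes "c > 0"
  shows "ereal c * (INF i\<in>I. f i) = (INF i\<in>I. ereal c * f i)"
  using ereal_Inf_cmult[OF assms, of "\<lambda>x. x \<in> f ` I"]
  by (simp add: image_image setcompr_eq_image)

lemma avg_cmult: "avg (\<lambda>y. c * f y) R = c * avg f R"
  by (simp add: avg_def set_lebesgue_integral_def mult.left_commute)

lemma upper_deriv_cmult:
  assumes "c > 0"
  shows "upper_deriv B (\<lambda>y. c * f y) x = ereal c * upper_deriv B f x"
  by (simp add: upper_deriv_def avg_cmult ereal_mult_INF_pos[OF assms] ereal_mult_SUP_pos[OF assms])

lemma lower_deriv_cmult:
  assumes "c > 0"
  shows "lower_deriv B (\<lambda>y. c * f y) x = ereal c * lower_deriv B f x"
  by (simp add: lower_deriv_def avg_cmult ereal_mult_INF_pos[OF assms] ereal_mult_SUP_pos[OF assms])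

lemma cmult_in_F_class:
  assumes "0 < c" and "f \<in> F_class B"
  shows "(\<lambda>y. c * f y) \<in> F_class B"
  using assms by (auto simp: F_class_def upper_deriv_cmult lower_deriv_cmult)

lemma
  assumes "diff_basis B"
  shows upper_deriv_zero: "upper_deriv B (\<lambda>_. 0) x = 0"
    and lower_deriv_zero: "lower_deriv B (\<lambda>_. 0) x = 0"
proof -
  have "{R \<in> B x. diameter R < \<delta>} \<noteq> {}" if "\<delta> > 0" for \<delta>
    using diff_basis_small_set[OF assms that] by blast
  then show "upper_deriv B (\<lambda>_. 0) x = 0" "lower_deriv B (\<lambda>_. 0) x = 0"
    by (simp_all add: upper_deriv_def lower_deriv_def avg_def)
qed

lemma zero_in_F_class: "diff_basis B \<Longrightarrow> (\<lambda>_. 0) \<in> F_class B"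
  by (simp add: F_class_def upper_deriv_zero lower_deriv_zero)

lemma INF_greaterThan_restrict:
  fixes F :: "real \<Rightarrow> 'a::complete_lattice"
  assumes "r > 0" and mono: "\<And>d d'. 0 < d \<Longrightarrow> d \<le> d' \<Longrightarrow> F d \<le> F d'"
  shows "(INF d\<in>{0<..}. F d) = (INF d\<in>{0<..r}. F d)"
proof (rule antisym)
  show "(INF d\<in>{0<..r}. F d) \<le> (INF d\<in>{0<..}. F d)"
  proof (rule INF_greatest)
    fix d :: real assume "d \<in> {0<..}"
    then have "(INF d\<in>{0<..r}. F d) \<le> F (min d r)"
      using \<open>r > 0\<close> by (intro INF_lower) auto
    also have "\<dots> \<le> F d"
      using \<open>d \<in> {0<..}\<close> \<open>r > 0\<close> by (intro mono) auto
    finally show "(INF d\<in>{0<..r}. F d) \<le> F d" .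
  qed
qed (rule INF_superset_mono; auto)

lemma SUP_greaterThan_restrict:
  fixes F :: "real \<Rightarrow> 'a::complete_lattice"
  assumes "r > 0" and antimono: "\<And>d d'. 0 < d \<Longrightarrow> d \<le> d' \<Longrightarrow> F d' \<le> F d"
  shows "(SUP d\<in>{0<..}. F d) = (SUP d\<in>{0<..r}. F d)"
proof (rule antisym)
  show "(SUP d\<in>{0<..}. F d) \<le> (SUP d\<in>{0<..r}. F d)"
  proof (rule SUP_least)
    fix d :: real assume "d \<in> {0<..}"
    then have "F d \<le> F (min d r)"
      using \<open>r > 0\<close> by (intro antimono) auto
    also have "\<dots> \<le> (SUP d\<in>{0<..r}. F d)"
      using \<open>d \<in> {0<..}\<close> \<open>r > 0\<close> by (intro SUP_upper) auto
    finally show "F d \<le> (SUP d\<in>{0<..r}. F d)" .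
  qed
qed (rule SUP_subset_mono; auto)

lemma avg_cong: "(\<And>y. y \<in> R \<Longrightarrow> f y = h y) \<Longrightarrow> avg f R = avg h R"
  unfolding avg_def set_lebesgue_integral_def
  by (metis (mono_tags, lifting) indicator_simps(2) scale_zero_left)

lemma
  assumes B: "diff_basis B" and "open U" and "x \<in> U" and fh: "\<And>y. y \<in> U \<Longrightarrow> f y = h y"
  shows upper_deriv_cong_open: "upper_deriv B f x = upper_deriv B h x"
    and lower_deriv_cong_open: "lower_deriv B f x = lower_deriv B h x"
proof -
  obtain r where r: "r > 0" "ball x r \<subseteq> U"
    using \<open>open U\<close> \<open>x \<in> U\<close> open_contains_ball by blast
  have avg: "avg f R = avg h R" if R: "R \<in> B x" "diameter R < r" for R
  proof (rule avg_cong)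
    fix y assume "y \<in> R"
    then have "dist x y < r"
      using diameter_bounded_bound[OF diff_basis_bounded[OF B R(1)] diff_basis_mem[OF B R(1)]] R(2)
      by fastforce
    then show "f y = h y"
      using r by (intro fh) auto
  qed
  show "upper_deriv B f x = upper_deriv B h x"
    unfolding upper_deriv_def
    by (subst (1 2) INF_greaterThan_restrict[OF r(1)])
      (auto intro!: SUP_subset_mono INF_cong SUP_cong simp: avg)
  show "lower_deriv B f x = lower_deriv B h x"
    unfolding lower_deriv_def
    by (subst (1 2) SUP_greaterThan_restrict[OF r(1)])
      (auto intro!: INF_superset_mono SUP_cong INF_cong simp: avg)
qed

lemma Gamma2_orthogonal: "g \<in> Gamma2 \<Longrightarrow> orthogonal_transformation g"
  by (simp add: Gamma2_def)

lemma rotation_about_decompose: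
  "(\<lambda>y. x + g (y - x)) ` R = (+) x ` g ` (\<lambda>y. y - x) ` R"
  by (simp add: image_image)

lemma dist_rotation_about:
  assumes "orthogonal_transformation g"
  shows "dist (x + g (a - x)) (x + g (b - x)) = dist a b"
proof -
  have "(x + g (a - x)) - (x + g (b - x)) = g (a - b)"
    using orthogonal_transformation_linear[OF assms] by (simp add: linear_diff)
  then show ?thesis
    using assms by (simp add: dist_norm orthogonal_transformation_norm)
qed

lemma diameter_rotation_about_le:
  assumes "orthogonal_transformation g" and "bounded R"
  shows "diameter ((\<lambda>y. x + g (y - x)) ` R) \<le> diameter R"
proof (rule diameter_le)
  fix u v assume "u \<in> (\<lambda>y. x + g (y - x)) ` R" "v \<in> (\<lambda>y. x + g (y - x)) ` R"
  then obtain a b where "a \<in> R" "b \<in> R" "u = x + g (a - x)" "v = x + g (b - x)"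
    by auto
  then show "norm (u - v) \<le> diameter R"
    using dist_rotation_about[OF assms(1)] diameter_bounded_bound[OF assms(2)] by (metis dist_norm)
qed (simp add: diameter_ge_0 assms(2))

lemma bounded_rotation_about:
  fixes g :: "'a::euclidean_space \<Rightarrow> 'a"
  assumes "orthogonal_transformation g" and "bounded R"
  shows "bounded ((\<lambda>y. x + g (y - x)) ` R)"
proof -
  have "bounded_linear g"
    using orthogonal_transformation_linear[OF assms(1)] by (simp add: linear_conv_bounded_linear)
  then show ?thesis
    unfolding rotation_about_decompose
    using assms(2) by (intro bounded_translation bounded_linear_image[OF bounded_translation_minus])
qed

lemma
  fixes g :: "pt \<Rightarrow> pt"
  assumes g: "orthogonal_transformation g" and R: "bounded R" "R \<in> sets lebesgue"
  shows lmeasurable_rotation_about: "(\<lambda>y. x + g (y - x)) ` R \<in> lmeasurable"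
    and measure_rotation_about: "measure lebesgue ((\<lambda>y. x + g (y - x)) ` R) = measure lebesgue R"
proof -
  have "R \<in> lmeasurable"
    using R bounded_set_imp_lmeasurable by blast
  then have "g ` (\<lambda>y. y - x) ` R \<in> lmeasurable"
    using g measurable_orthogonal_image measurable_translation_subtract by blast
  then show "(\<lambda>y. x + g (y - x)) ` R \<in> lmeasurable"
    unfolding rotation_about_decompose by (rule measurable_translation)
  show "measure lebesgue ((\<lambda>y. x + g (y - x)) ` R) = measure lebesgue R"
    unfolding rotation_about_decompose using g \<open>R \<in> lmeasurable\<close>
    by (simp add: measure_translation measure_orthogonal_image measurable_translation_subtract
        measure_translation_subtract)
qed

lemma diff_basis_rotated_basis:
  assumes B: "diff_basis B" and g: "orthogonal_transformation g"
  shows "diff_basis (rotated_basis B g)"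
  unfolding diff_basis_def
proof (intro allI conjI ballI)
  fix x R assume "R \<in> rotated_basis B g x"
  then obtain R0 where R0: "R0 \<in> B x" and R: "R = (\<lambda>y. x + g (y - x)) ` R0"
    by (auto simp: rotated_basis_def)
  note R0_props = diff_basis_bounded[OF B R0] diff_basis_sets[OF B R0]
    diff_basis_emeasure_pos[OF B R0] diff_basis_mem[OF B R0]
  show "bounded R"
    unfolding R by (rule bounded_rotation_about[OF g R0_props(1)])
  have lm: "R \<in> lmeasurable"
    unfolding R by (rule lmeasurable_rotation_about[OF g R0_props(1,2)])
  then show "R \<in> sets lebesgue"
    by (simp add: fmeasurable_def)
  have "emeasure lebesgue R = emeasure lebesgue R0"
    using lm bounded_set_imp_lmeasurable[OF R0_props(1,2)] measure_rotation_about[OF g R0_props(1,2)]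
    by (simp add: R emeasure_eq_measure2)
  then show "0 < emeasure lebesgue R"
    using R0_props(3) by simp
  show "x \<in> R"
    unfolding R using R0_props(4)
    by (rule image_eqI[rotated]) (simp add: linear_0 orthogonal_transformation_linear[OF g])
next
  fix x
  obtain Rs where Rs: "\<And>k. Rs k \<in> B x" "(\<lambda>k. diameter (Rs k)) \<longlonglongrightarrow> 0"
    using B unfolding diff_basis_def by blast
  let ?Rs = "\<lambda>k. (\<lambda>y. x + g (y - x)) ` Rs k"
  have "\<And>k. ?Rs k \<in> rotated_basis B g x"
    using Rs(1) by (auto simp: rotated_basis_def)
  moreover have "(\<lambda>k. diameter (?Rs k)) \<longlonglongrightarrow> 0"
  proof (rule tendsto_sandwich[OF _ _ tendsto_const Rs(2)])
    show "\<forall>\<^sub>F k in sequentially. 0 \<le> diameter (?Rs k)"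
      by (intro always_eventually allI diameter_ge_0 bounded_rotation_about[OF g]
          diff_basis_bounded[OF B Rs(1)])
    show "\<forall>\<^sub>F k in sequentially. diameter (?Rs k) \<le> diameter (Rs k)"
      using diff_basis_bounded[OF B Rs(1)]
      by (intro always_eventually allI diameter_rotation_about_le[OF g])
  qed
  ultimately show "\<exists>Rs. (\<forall>k. Rs k \<in> rotated_basis B g x) \<and> (\<lambda>k. diameter (Rs k)) \<longlonglongrightarrow> 0"
    by (intro exI[of _ ?Rs]) blast
qed

definition strip :: "nat \<Rightarrow> pt set"
  where "strip n = {y. real n < y$1 \<and> y$1 < real n + 1}"

lemma strip_index:
  assumes "y \<in> strip n"
  shows "nat \<lfloor>y$1\<rfloor> = n"
proof -
  have "\<lfloor>y$1\<rfloor> = int n"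
    using assms by (intro floor_unique) (auto simp: strip_def)
  then show ?thesis by simp
qed

lemma indicator_strip_eq_0: "n \<noteq> nat \<lfloor>y$1\<rfloor> \<Longrightarrow> indicator (strip n) y = 0"
  using strip_index[of y n] by (auto simp: indicator_def)

lemma open_strip: "open (strip n)"
proof -
  have "strip n = {y. y$1 > real n} \<inter> {y. y$1 < real n + 1}"
    by (auto simp: strip_def)
  then show ?thesis
    by (simp add: open_Int open_halfspace_component_lt_cart open_halfspace_component_gt_cart)
qed

lemma sets_strip: "strip n \<in> sets lebesgue"
  by (simp add: open_strip borel_open)

lemma strip_not_null: "strip n \<notin> null_sets lebesgue"
proof -
  have "(\<chi> i. real n + 1/2) \<in> strip n"
    by (simp add: strip_def)
  then show ?thesis
    using open_not_negligible[OF open_strip] negligible_iff_null_sets by blast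
qed

lemma AE_left_half_or_strip: "AE x in lebesgue. x$1 < 0 \<or> x \<in> strip (nat \<lfloor>x$1\<rfloor>)"
proof (rule AE_I')
  have "negligible {y::pt. axis 1 1 \<bullet> y = real n}" for n
    by (rule negligible_hyperplane) (simp add: axis_eq_0_iff)
  then have "{y::pt. y$1 = real n} \<in> null_sets lebesgue" for n
    by (simp add: cart_eq_inner_axis inner_commute negligible_iff_null_sets)
  then show "(\<Union>n. {y::pt. y$1 = real n}) \<in> null_sets lebesgue"
    by blast
  show "{x \<in> space lebesgue. \<not> (x$1 < 0 \<or> x \<in> strip (nat \<lfloor>x$1\<rfloor>))} \<subseteq> (\<Union>n. {y. y$1 = real n})"
  proof
    fix x :: pt assume "x \<in> {x \<in> space lebesgue. \<not> (x$1 < 0 \<or> x \<in> strip (nat \<lfloor>x$1\<rfloor>))}"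
    then have "x$1 = real (nat \<lfloor>x$1\<rfloor>)"
      by (simp add: strip_def) linarith
    then show "x \<in> (\<Union>n. {y. y$1 = real n})"
      by blast
  qed
qed

definition glue :: "(nat \<Rightarrow> pt \<Rightarrow> real) \<Rightarrow> pt \<Rightarrow> real"
  where "glue G y = (\<Sum>n. indicator (strip n) y * G n y)"

lemma glue_eq: "glue G y = (if y \<in> strip (nat \<lfloor>y$1\<rfloor>) then G (nat \<lfloor>y$1\<rfloor>) y else 0)"
  unfolding glue_def
  by (subst suminf_finite[of "{nat \<lfloor>y$1\<rfloor>}"])
    (auto simp: indicator_strip_eq_0 simp del: sum_indicator_mult)

lemma glue_strip: "y \<in> strip n \<Longrightarrow> glue G y = G n y"
  by (simp add: glue_eq strip_index)

lemma glue_left_half: "y$1 < 0 \<Longrightarrow> glue G y = 0"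
  by (simp add: glue_eq strip_def)

lemma integrable_glue:
  assumes G: "\<And>n. integrable lebesgue (G n)"
    and summable: "summable (\<lambda>n. LINT y|lebesgue. norm (G n y))"
  shows "integrable lebesgue (glue G)"
  unfolding glue_def
proof (rule integrable_suminf)
  show int: "integrable lebesgue (\<lambda>y. indicator (strip n) y * G n y)" for n
    using integrable_mult_indicator[OF sets_strip G] by simp
  show "AE y in lebesgue. summable (\<lambda>n. norm (indicator (strip n) y * G n y))"
  proof (rule AE_I2)
    fix y :: pt
    show "summable (\<lambda>n. norm (indicator (strip n) y * G n y))"
      by (intro summable_finite[of "{nat \<lfloor>y$1\<rfloor>}"]) (auto simp: indicator_strip_eq_0)
  qed
  have "(LINT y|lebesgue. norm (indicator (strip n) y * G n y)) \<le> (LINT y|lebesgue. norm (G n y))"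
    for n
    by (rule integral_mono[OF integrable_norm[OF int] integrable_norm[OF G]])
      (simp add: indicator_def abs_mult)
  then show "summable (\<lambda>n. LINT y|lebesgue. norm (indicator (strip n) y * G n y))"
    by (intro summable_comparison_test'[OF summable, where N=0]) (simp add: integral_nonneg_AE)
qed

lemma glue_not_in_F_class:
  assumes B: "diff_basis B" and infinite: "AE x in lebesgue. upper_deriv B (G k) x = \<infinity>"
  shows "glue G \<notin> F_class B"
proof
  assume "glue G \<in> F_class B"
  then have "AE x in lebesgue. upper_deriv B (glue G) x = ereal (glue G x)"
    by (auto simp: F_class_def)
  with infinite have "AE x in lebesgue. x \<notin> strip k"
  proof eventually_elim
    case (elim x)
    show "x \<notin> strip k"
    proof
      assume "x \<in> strip k"
      then have "upper_deriv B (glue G) x = upper_deriv B (G k) x"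
        using glue_strip by (intro upper_deriv_cong_open[OF B open_strip])
      with elim show False by simp
    qed
  qed
  then have "strip k \<in> null_sets lebesgue"
    by (simp add: AE_iff_null_sets sets_strip)
  with strip_not_null show False by blast
qed

lemma glue_in_F_class:
  assumes B: "diff_basis B" and "integrable lebesgue (glue G)" and G: "\<And>n. G n \<in> F_class B"
  shows "glue G \<in> F_class B"
proof -
  have "AE x in lebesgue. \<forall>n. upper_deriv B (G n) x = G n x \<and> lower_deriv B (G n) x = G n x"
    using G by (simp add: F_class_def AE_all_countable)
  with AE_left_half_or_strip
  have "AE x in lebesgue. upper_deriv B (glue G) x = glue G x \<and> lower_deriv B (glue G) x = glue G x"
  proof eventually_elim
    case (elim x)
    from elim(1) show ?case
    proof
      assume left: "x$1 < 0"
      have "open {y::pt. y$1 < 0}"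
        by (rule open_halfspace_component_lt_cart)
      with left have "upper_deriv B (glue G) x = upper_deriv B (\<lambda>_. 0) x"
        and "lower_deriv B (glue G) x = lower_deriv B (\<lambda>_. 0) x"
        by (auto intro!: upper_deriv_cong_open[OF B] lower_deriv_cong_open[OF B] glue_left_half)
      with left show ?case
        by (simp add: glue_left_half upper_deriv_zero[OF B] lower_deriv_zero[OF B])
    next
      assume strip: "x \<in> strip (nat \<lfloor>x$1\<rfloor>)"
      then have "upper_deriv B (glue G) x = upper_deriv B (G (nat \<lfloor>x$1\<rfloor>)) x"
        and "lower_deriv B (glue G) x = lower_deriv B (G (nat \<lfloor>x$1\<rfloor>)) x"
        by (auto intro!: upper_deriv_cong_open[OF B open_strip] lower_deriv_cong_open[OF B open_strip]
            glue_strip)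
      with strip elim(2) show ?case
        by (simp add: glue_strip)
    qed
  qed
  with assms(2) show ?thesis
    by (simp add: F_class_def)
qed

definition R_witness ::
    "(pt \<Rightarrow> pt set set) \<Rightarrow> (pt \<Rightarrow> pt set set) \<Rightarrow> (pt \<Rightarrow> pt) set \<Rightarrow> (pt \<Rightarrow> real) \<Rightarrow> bool"
  where "R_witness B H E F \<longleftrightarrow> integrable lebesgue F \<and>
     (\<forall>g\<in>E. AE x in lebesgue. upper_deriv (rotated_basis B g) F x = \<infinity>) \<and>
     (\<forall>g\<in>Gamma2 - E. F \<in> F_class (rotated_basis H g))"

definition W_witness ::
    "(pt \<Rightarrow> pt set set) \<Rightarrow> (pt \<Rightarrow> pt set set) \<Rightarrow> (pt \<Rightarrow> pt) set \<Rightarrow> (pt \<Rightarrow> real) \<Rightarrow> bool"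
  where "W_witness B H E f \<longleftrightarrow> integrable lebesgue f \<and>
     (\<forall>g\<in>E. f \<notin> F_class (rotated_basis B g)) \<and>
     (\<forall>g\<in>Gamma2 - E. f \<in> F_class (rotated_basis H g))"

lemma R_set_iff: "R_set B H E \<longleftrightarrow> E \<subseteq> Gamma2 \<and> (\<exists>F. R_witness B H E F)"
  by (simp add: R_set_def R_witness_def)

lemma R_plus_set_iff:
  "R_plus_set B H E \<longleftrightarrow> E \<subseteq> Gamma2 \<and> (\<exists>F. (\<forall>x. F x \<ge> 0) \<and> R_witness B H E F)"
  by (auto simp: R_plus_set_def R_witness_def)

lemma W_set_iff: "W_set B H E \<longleftrightarrow> E \<subseteq> Gamma2 \<and> (\<exists>f. W_witness B H E f)"
  by (simp add: W_set_def W_witness_def)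

lemma W_plus_set_iff:
  "W_plus_set B H E \<longleftrightarrow> E \<subseteq> Gamma2 \<and> (\<exists>f. (\<forall>x. f x \<ge> 0) \<and> W_witness B H E f)"
  by (auto simp: W_plus_set_def W_witness_def)

lemma R_witness_empty: "diff_basis H \<Longrightarrow> R_witness B H {} (\<lambda>_. 0)"
  by (simp add: R_witness_def zero_in_F_class diff_basis_rotated_basis Gamma2_orthogonal)

lemma integral_norm_damped_le:
  fixes f :: "'a \<Rightarrow> real"
  assumes "0 \<le> \<epsilon>"
  shows "(LINT y|M. norm (\<epsilon> / (1 + (LINT y|M. norm (f y))) * f y)) \<le> \<epsilon>"
proof -
  define I where "I = (LINT y|M. norm (f y))"
  have "0 \<le> I"
    unfolding I_def by simp
  have "(LINT y|M. norm (\<epsilon> / (1 + I) * f y)) = \<epsilon> * (I / (1 + I))"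
    using \<open>0 \<le> I\<close> assms by (simp add: abs_mult I_def)
  also have "\<dots> \<le> \<epsilon> * 1"
    using \<open>0 \<le> I\<close> assms by (intro mult_left_mono) auto
  finally show ?thesis
    by (simp add: I_def)
qed

lemma W_witness_glue:
  fixes F :: "nat \<Rightarrow> pt \<Rightarrow> real"
  assumes B: "diff_basis B" and H: "diff_basis H" and e: "\<And>n. e n \<subseteq> Gamma2"
    and F: "\<And>n. R_witness B H (e n) (F n)"
  shows "\<exists>c. (\<forall>n. 0 < c n) \<and> W_witness B H (\<Union>n. e n) (glue (\<lambda>n y. c n * F n y))"
proof (intro exI conjI allI)
  define c where "c n = (1/2)^n / (1 + (LINT y|lebesgue. norm (F n y)))" for n
  let ?G = "\<lambda>n y. c n * F n y"
  show c_pos: "0 < c n" for n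
    unfolding c_def by (simp add: integral_nonneg_AE add_pos_nonneg)
  have damped: "(LINT y|lebesgue. norm (?G n y)) \<le> (1/2)^n" for n
    unfolding c_def by (rule integral_norm_damped_le) simp
  have "summable (\<lambda>n. LINT y|lebesgue. norm (?G n y))"
  proof (rule summable_comparison_test'[OF summable_geometric[of "1/2::real"], where N=0])
    fix n :: nat
    have "0 \<le> (LINT y|lebesgue. norm (?G n y))"
      by simp
    with damped show "norm (LINT y|lebesgue. norm (?G n y)) \<le> (1/2)^n"
      by simp
  qed simp
  then have int: "integrable lebesgue (glue ?G)"
    using F by (intro integrable_glue) (simp add: R_witness_def)
  have "glue ?G \<notin> F_class (rotated_basis B g)" if g: "g \<in> e k" for g k
  proof (rule glue_not_in_F_class)
    show "diff_basis (rotated_basis B g)"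
      using g e B diff_basis_rotated_basis Gamma2_orthogonal by blast
    show "AE x in lebesgue. upper_deriv (rotated_basis B g) (?G k) x = \<infinity>"
      using F[of k] g c_pos[of k] by (simp add: R_witness_def upper_deriv_cmult)
  qed
  moreover have "glue ?G \<in> F_class (rotated_basis H g)" if g: "g \<in> Gamma2 - (\<Union>n. e n)" for g
  proof (rule glue_in_F_class[OF _ int])
    show "diff_basis (rotated_basis H g)"
      using g H diff_basis_rotated_basis Gamma2_orthogonal by blast
    show "?G n \<in> F_class (rotated_basis H g)" for n
      using F[of n] g c_pos[of n] by (intro cmult_in_F_class) (auto simp: R_witness_def)
  qed
  ultimately show "W_witness B H (\<Union>n. e n) (glue ?G)"
    using int by (auto simp: W_witness_def)
qed

lemma countable_union_W_witness:
  assumes B: "diff_basis B" and H: "diff_basis H" and "countable \<E>"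
    and wit: "\<And>E. E \<in> \<E> \<Longrightarrow> E \<subseteq> Gamma2 \<and> (\<exists>F. (\<forall>x. P (F x)) \<and> R_witness B H E F)"
    and P0: "P 0" and P_scale: "\<And>c t. 0 < c \<Longrightarrow> P t \<Longrightarrow> P (c * t)"
  shows "\<exists>f. (\<forall>x. P (f x)) \<and> W_witness B H (\<Union>\<E>) f"
proof -
  define e where "e = from_nat_into (insert {} \<E>)"
  have range_e: "range e = insert {} \<E>"
    unfolding e_def using \<open>countable \<E>\<close> by (simp add: range_from_nat_into)
  have "\<exists>F. e n \<subseteq> Gamma2 \<and> (\<forall>x. P (F x)) \<and> R_witness B H (e n) F" for n
  proof (cases "e n = {}")
    case True
    then show ?thesis
      using R_witness_empty[OF H] P0 by auto
  next
    case False
    then have "e n \<in> \<E>"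
      using range_e by blast
    then show ?thesis
      using wit by blast
  qed
  then obtain F where F: "\<And>n. e n \<subseteq> Gamma2 \<and> (\<forall>x. P (F n x)) \<and> R_witness B H (e n) (F n)"
    by metis
  then obtain c where c: "\<And>n. 0 < c n"
    and W: "W_witness B H (\<Union>n. e n) (glue (\<lambda>n y. c n * F n y))"
    using W_witness_glue[OF B H, of e F] by blast
  have "P (glue (\<lambda>n y. c n * F n y) y)" for y
    using F c P0 P_scale by (simp add: glue_eq)
  moreover have "(\<Union>n. e n) = \<Union>\<E>"
    using range_e by auto
  ultimately show ?thesis
    using W by auto
qed

theorem theorem3:
  fixes B H :: "pt \<Rightarrow> pt set set"
  assumes "diff_basis B" and "diff_basis H" and "basis_subset B H"
  shows "(\<forall>\<E>. countable \<E> \<and> (\<forall>E\<in>\<E>. R_set B H E) \<longrightarrow> W_set B H (\<Union>\<E>)) \<and>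
         (\<forall>\<E>. countable \<E> \<and> (\<forall>E\<in>\<E>. R_plus_set B H E) \<longrightarrow> W_plus_set B H (\<Union>\<E>))"
proof (intro conjI allI impI; elim conjE)
  fix \<E> assume "countable \<E>" and R: "\<forall>E\<in>\<E>. R_set B H E"
  then obtain f where "W_witness B H (\<Union>\<E>) f"
    using countable_union_W_witness[OF assms(1,2), of \<E> "\<lambda>_. True"] by (auto simp: R_set_iff)
  moreover have "\<Union>\<E> \<subseteq> Gamma2"
    using R by (auto simp: R_set_iff)
  ultimately show "W_set B H (\<Union>\<E>)"
    by (auto simp: W_set_iff)
next
  fix \<E> assume "countable \<E>" and R: "\<forall>E\<in>\<E>. R_plus_set B H E"
  then obtain f where "(\<forall>x. 0 \<le> f x) \<and> W_witness B H (\<Union>\<E>) f"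
    using countable_union_W_witness[OF assms(1,2), of \<E> "\<lambda>t. 0 \<le> t"]
    by (auto simp: R_plus_set_iff)
  moreover have "\<Union>\<E> \<subseteq> Gamma2"
    using R by (auto simp: R_plus_set_iff)
  ultimately show "W_plus_set B H (\<Union>\<E>)"
    by (auto simp: W_plus_set_iff)
qed

end
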